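(* Let $S$ be a semigroup of transformations of a finite set $\Omega$, and suppose $S$ contains a permutation group $G$ that is primitive on $\Omega$. Suppose the minimum rank of an element of $S$ is $r$, where $r>1$. Then $S$ contains no element of rank $r+1$.
   Context: The rank of a transformation $h$ is $|\Omega h|$. A permutation group is primitive if it is transitive and preserves no equivalence relation other than equality and the universal relation. *)

theory Defs
  imports Main
begin

text \<open>Transformations of the finite set Omega are modelled as functions on a finite
type 'a (Omega = UNIV). The rank of h is the size of its image.\<close>

definition rank :: "('a \<Rightarrow> 'a) \<Rightarrow> nat" where
  "rank h = card (range h)"

definition transformation_semigroup :: "('a \<Rightarrow> 'a) set \<Rightarrow> bool" where
  "transformation_semigroup S \<longleftrightarrow> (\<forall>f\<in>S. \<forall>g\<in>S. f \<circ> g \<in> S)"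

definition permutation_group :: "('a \<Rightarrow> 'a) set \<Rightarrow> bool" where
  "permutation_group G \<longleftrightarrow> id \<in> G \<and> (\<forall>g\<in>G. bij g \<and> inv g \<in> G)
     \<and> (\<forall>g\<in>G. \<forall>h\<in>G. g \<circ> h \<in> G)"

definition preserves :: "('a \<Rightarrow> 'a) set \<Rightarrow> 'a rel \<Rightarrow> bool" where
  "preserves G R \<longleftrightarrow> (\<forall>g\<in>G. \<forall>x y. (x, y) \<in> R \<longrightarrow> (g x, g y) \<in> R)"

definition transitive_group :: "('a \<Rightarrow> 'a) set \<Rightarrow> bool" where
  "transitive_group G \<longleftrightarrow> (\<forall>x y. \<exists>g\<in>G. g x = y)"

definition primitive :: "('a \<Rightarrow> 'a) set \<Rightarrow> bool" where
  "primitive G \<longleftrightarrow> transitive_group G \<and>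
     (\<forall>R. equiv UNIV R \<and> preserves G R \<longrightarrow> R = Id \<or> R = UNIV)"

end

theory Submission
  imports Defs
begin

text \<open>Let \<open>a \<in> S\<close> have the minimal rank \<open>r\<close> and \<open>f \<in> S\<close> rank \<open>r + 1\<close>. Every element \<open>q\<close> of
  rank \<open>r\<close> maps the image of any rank-\<open>r\<close> element of \<open>S\<close> bijectively onto its own image,
  since otherwise \<open>q \<circ> h\<close> would have rank below \<open>r\<close>. The images of \<open>f \<circ> g \<circ> a\<close> for
  \<open>g \<in> S\<close> are the sets \<open>range f - {c}\<close>, and transitivity of \<open>G\<close> yields two of them
  with different missing points \<open>b \<noteq> b'\<close>. Then every \<open>q\<close> of rank \<open>r\<close> identifies \<open>b\<close>
  and \<open>b'\<close>, so the common kernel of these \<open>q\<close> is a \<open>G\<close>-invariant equivalence relation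
  other than equality. By primitivity it is universal, which makes \<open>a\<close> constant,
  contradicting \<open>r > 1\<close>.\<close>

lemma rank_comp: "rank (s \<circ> t) = card (s ` range t)"
  unfolding rank_def by (simp add: image_comp)

lemma rank_comp_le_right:
  fixes s t :: "'a::finite \<Rightarrow> 'a"
  shows "rank (s \<circ> t) \<le> rank t"
  unfolding rank_comp by (simp add: rank_def card_image_le)

lemma rank_comp_bij_right: "bij g \<Longrightarrow> rank (q \<circ> g) = rank q"
  unfolding rank_comp by (simp add: rank_def bij_is_surj)

lemma transformation_semigroupD:
  "transformation_semigroup S \<Longrightarrow> f \<in> S \<Longrightarrow> g \<in> S \<Longrightarrow> f \<circ> g \<in> S"
  unfolding transformation_semigroup_def by blast

definition rank_kernel :: "('a \<Rightarrow> 'a) set \<Rightarrow> nat \<Rightarrow> 'a rel" where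
  "rank_kernel S r = {(x, y). \<forall>q\<in>S. rank q = r \<longrightarrow> q x = q y}"

lemma equiv_rank_kernel: "equiv UNIV (rank_kernel S r)"
  unfolding rank_kernel_def equiv_def refl_on_def sym_def trans_def by auto

lemma rank_kernel_UNIV_imp_le_one:
  fixes a :: "'a::finite \<Rightarrow> 'a"
  assumes "rank_kernel S r = UNIV" "a \<in> S" "rank a = r"
  shows "r \<le> 1"
proof -
  have "range a \<subseteq> {a x}" for x using assms unfolding rank_kernel_def by auto
  then show ?thesis using assms(3) card_mono[of "{a undefined}" "range a"]
    by (simp add: rank_def)
qed

lemma subset_card_Suc_eq_delete:
  assumes "A \<subseteq> B" "finite B" "card B = Suc (card A)"
  shows "\<exists>c\<in>B. A = B - {c}"
proof -
  have "\<not> B \<subseteq> A" using assms by (metis subset_antisym n_not_Suc_n)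
  then obtain c where c: "c \<in> B" "c \<notin> A" by blast
  have "A \<subseteq> B - {c}" using assms(1) c by blast
  moreover have "card (B - {c}) = card A" using assms c by simp
  ultimately have "A = B - {c}" using assms(2) card_subset_eq by (metis finite_Diff)
  then show ?thesis using c(1) by blast
qed

lemma inj_on_delete_collapse:
  assumes "q b \<in> q ` (B - {b})" and "inj_on q (B - {b'})" and "b \<in> B" "b \<noteq> b'"
  shows "q b = q b'"
proof -
  obtain c where c: "c \<in> B - {b}" "q c = q b" using assms(1) by force
  show ?thesis
  proof (cases "c = b'")
    case False
    then have "c = b" using c assms(2-) by (auto simp: inj_on_def)
    then show ?thesis using c(1) by blast
  qed (use c in simp)
qed

context
  fixes S :: "('a::finite \<Rightarrow> 'a) set" and r :: nat
  assumes semigroup: "transformation_semigroup S"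
    and rank_min: "\<And>s. s \<in> S \<Longrightarrow> r \<le> rank s"
begin

lemma min_rank_bij_betw_range:
  assumes "h \<in> S" "rank h = r" "q \<in> S" "rank q = r"
  shows "bij_betw q (range h) (range q)"
proof -
  have "r \<le> card (q ` range h)"
    using rank_min[OF transformation_semigroupD[OF semigroup assms(3,1)]] by (simp add: rank_comp)
  then have card_eq: "card (q ` range h) = card (range h)"
    using card_image_le[of "range h" q] assms(2) by (simp add: rank_def)
  then have "inj_on q (range h)" by (simp add: eq_card_imp_inj_on)
  moreover have "q ` range h = range q"
    using card_eq assms(2,4) card_subset_eq[of "range q" "q ` range h"]
    by (auto simp: rank_def)
  ultimately show ?thesis by (simp add: bij_betw_def)
qed

lemma rank_comp_min_rank:
  assumes "f \<in> S" "h \<in> S" "rank h = r"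
  shows "rank (f \<circ> h) = r"
  using rank_min[OF transformation_semigroupD[OF semigroup assms(1,2)]]
    rank_comp_le_right[of f h] assms(3) by simp

lemma min_rank_comp_range_delete:
  assumes "f \<in> S" "rank f = Suc r" "h \<in> S" "rank h = r"
  shows "\<exists>c\<in>range f. range (f \<circ> h) = range f - {c}"
proof -
  have "range (f \<circ> h) \<subseteq> range f" by auto
  then show ?thesis
    using assms(2) rank_comp_min_rank[OF assms(1,3,4)] subset_card_Suc_eq_delete
    by (metis finite rank_def)
qed

lemma rank_kernel_preserved:
  assumes "G \<subseteq> S" "permutation_group G"
  shows "preserves G (rank_kernel S r)"
  unfolding preserves_def
proof (intro ballI allI impI)
  fix g x y
  assume g: "g \<in> G" and xy: "(x, y) \<in> rank_kernel S r"
  have "q (g x) = q (g y)" if q: "q \<in> S" "rank q = r" for q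
  proof -
    have "q \<circ> g \<in> S" using g q(1) assms(1) semigroup transformation_semigroupD by blast
    moreover have "rank (q \<circ> g) = r"
      using g assms(2) q(2) rank_comp_bij_right unfolding permutation_group_def by blast
    ultimately show ?thesis using xy unfolding rank_kernel_def by auto
  qed
  then show "(g x, g y) \<in> rank_kernel S r" unfolding rank_kernel_def by simp
qed

lemma rank_kernel_nontrivial:
  assumes "a \<in> S" "rank a = r" "f \<in> S" "rank f = Suc r"
    and "G \<subseteq> S" "transitive_group G"
  shows "\<exists>b b'. b \<noteq> b' \<and> (b, b') \<in> rank_kernel S r"
proof -
  obtain b where b: "b \<in> range f" and E1: "range (f \<circ> a) = range f - {b}"
    using min_rank_comp_range_delete[OF assms(3,4,1,2)] by blast
  obtain y where y: "f y = b" using b by blast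
  obtain g where "g \<in> G" and g: "g (a y) = y"
    using assms(6) unfolding transitive_group_def by blast
  then have gaS: "g \<circ> a \<in> S" using assms(1,5) semigroup transformation_semigroupD by blast
  have rank_ga: "rank (g \<circ> a) = r" using rank_comp_min_rank \<open>g \<in> G\<close> assms(1,2,5) by blast
  obtain b' where E2: "range (f \<circ> (g \<circ> a)) = range f - {b'}"
    using min_rank_comp_range_delete[OF assms(3,4) gaS rank_ga] by blast
  have "b \<in> range (f \<circ> (g \<circ> a))" using g y by (metis comp_apply rangeI)
  then have "b \<noteq> b'" using E2 by blast
  moreover have "q b = q b'" if "q \<in> S" "rank q = r" for q
  proof (rule inj_on_delete_collapse[OF _ _ b \<open>b \<noteq> b'\<close>])
    have "bij_betw q (range (f \<circ> a)) (range q)"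
      using min_rank_bij_betw_range[OF _ rank_comp_min_rank[OF assms(3,1,2)] that]
        assms(1,3) semigroup transformation_semigroupD by blast
    then show "q b \<in> q ` (range f - {b})" using E1 by (simp add: bij_betw_def)
    have "bij_betw q (range (f \<circ> (g \<circ> a))) (range q)"
      using min_rank_bij_betw_range[OF _ rank_comp_min_rank[OF assms(3) gaS rank_ga] that]
        assms(3) gaS semigroup transformation_semigroupD by blast
    then show "inj_on q (range f - {b'})" using E2 by (simp add: bij_betw_def)
  qed
  ultimately show ?thesis unfolding rank_kernel_def by blast
qed

end

theorem corollary13:
  fixes S G :: "('a::finite \<Rightarrow> 'a) set" and r :: nat
  assumes "transformation_semigroup S"
    and "G \<subseteq> S" and "permutation_group G" and "primitive G"
    and "r = Min (rank ` S)"
    and "r > 1"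
  shows "\<not> (\<exists>f\<in>S. rank f = r + 1)"
proof
  assume "\<exists>f\<in>S. rank f = r + 1"
  then obtain f where f: "f \<in> S" "rank f = Suc r" by auto
  have "finite S" by simp
  then have rank_min: "\<And>s. s \<in> S \<Longrightarrow> r \<le> rank s" using assms(5) by simp
  have "S \<noteq> {}" using assms(2,3) unfolding permutation_group_def by blast
  then have "r \<in> rank ` S" using assms(5) Min_in \<open>finite S\<close> by blast
  then obtain a where a: "a \<in> S" "rank a = r" by auto
  have G: "transitive_group G" "\<forall>R. equiv UNIV R \<and> preserves G R \<longrightarrow> R = Id \<or> R = UNIV"
    using assms(4) unfolding primitive_def by blast+
  obtain b b' where "b \<noteq> b'" "(b, b') \<in> rank_kernel S r"
    using rank_kernel_nontrivial[OF assms(1) rank_min a f assms(2) G(1)] by blast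
  moreover have "preserves G (rank_kernel S r)"
    using rank_kernel_preserved[OF assms(1) rank_min assms(2,3)] .
  ultimately have "rank_kernel S r = UNIV" using G(2) equiv_rank_kernel by blast
  then show False using rank_kernel_UNIV_imp_le_one a assms(6) by fastforce
qed

end
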